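(* For every finite hypergraph $H$, $\mathrm{ch}_{um}(H)\le s(H)$.
   Context: For a hypergraph $H$ with hyperedge set $\mathcal E(H)$ (nonempty hyperedges), $s(H)$ is the minimum positive integer $s$ with $|\mathcal E(H)|\le s(s-1)/2$. A coloring $C\colon V\to\mathbb Z_{>0}$ is unique-maximum if in every hyperedge the maximum color is attained by exactly one vertex. The um-choice number $\mathrm{ch}_{um}(H)$ is the minimum $k$ such that for every family $\{L_v\}_{v\in V}$ of sets of positive integers with $|L_v|\ge k$ there is a unique-maximum coloring $C$ with $C(v)\in L_v$ for all $v$. *)

theory Defs
  imports Main
begin

definition finite_hypergraph :: "'a set \<Rightarrow> 'a set set \<Rightarrow> bool" where
  "finite_hypergraph V E \<longleftrightarrow> finite V \<and> (\<forall>e\<in>E. e \<noteq> {} \<and> e \<subseteq> V)"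

definition s_num :: "'a set set \<Rightarrow> nat" where
  "s_num E = (LEAST s::nat. 0 < s \<and> card E \<le> s * (s - 1) div 2)"

definition um_coloring :: "'a set \<Rightarrow> 'a set set \<Rightarrow> ('a \<Rightarrow> nat) \<Rightarrow> bool" where
  "um_coloring V E C \<longleftrightarrow> (\<forall>v\<in>V. 0 < C v) \<and>
     (\<forall>e\<in>E. \<exists>!v. v \<in> e \<and> C v = Max (C ` e))"

definition um_choosable :: "'a set \<Rightarrow> 'a set set \<Rightarrow> nat \<Rightarrow> bool" where
  "um_choosable V E k \<longleftrightarrow>
     (\<forall>L :: 'a \<Rightarrow> nat set.
        (\<forall>v\<in>V. L v \<subseteq> {0<..} \<and> (infinite (L v) \<or> k \<le> card (L v))) \<longrightarrow>
        (\<exists>C. um_coloring V E C \<and> (\<forall>v\<in>V. C v \<in> L v)))"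

definition ch_um :: "'a set \<Rightarrow> 'a set set \<Rightarrow> nat" where
  "ch_um V E = (LEAST k. um_choosable V E k)"

end

theory Submission
  imports Defs
begin

(*
  Call an edge "strictly topped" by a
  colouring C if some vertex of the edge has a colour strictly larger than all other
  vertices of the edge; for finite edges this is exactly the unique-maximum property.

  Main lemma: if every list has at least k \<ge> 1 elements and |E| \<le> k(k-1)/2, the
  hypergraph has a list colouring topping every edge.  Induction on |V|:
  - a vertex u of degree < k: colour the weak deletion (u removed from every edge) by
    induction, then give u a colour of its list that avoids the maxima of the at most
    deg(u) < k shrunken edges through u;
  - all degrees \<ge> k: let c be the largest colour in all lists, attained in the list
    of u.  Delete u together with its \<ge> k edges, remove c from all lists and use
    induction with k-1, since k(k-1)/2 - k \<le> (k-1)(k-2)/2; then u gets colour c,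
    which tops every edge through u.
  The theorem follows by shrinking arbitrary lists to finite lists of size s(H).
*)

definition strictly_topped :: "('a \<Rightarrow> nat) \<Rightarrow> 'a set \<Rightarrow> bool" where
  "strictly_topped C e \<longleftrightarrow> (\<exists>v\<in>e. \<forall>w\<in>e. w \<noteq> v \<longrightarrow> C w < C v)"

definition topping_list_colourable :: "'a set \<Rightarrow> 'a set set \<Rightarrow> ('a \<Rightarrow> nat set) \<Rightarrow> bool" where
  "topping_list_colourable V E L \<longleftrightarrow>
     (\<exists>C. (\<forall>v\<in>V. C v \<in> L v) \<and> (\<forall>e\<in>E. strictly_topped C e))"

definition weak_delete :: "'a \<Rightarrow> 'a set set \<Rightarrow> 'a set set" where
  "weak_delete u E = (\<lambda>e. e - {u}) ` E - {{}}"

definition strong_delete :: "'a \<Rightarrow> 'a set set \<Rightarrow> 'a set set" where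
  "strong_delete u E = {e \<in> E. u \<notin> e}"

definition degree :: "'a \<Rightarrow> 'a set set \<Rightarrow> nat" where
  "degree u E = card {e \<in> E. u \<in> e}"

lemma strictly_topped_imp_unique_max:
  assumes "finite e" "strictly_topped C e"
  shows "\<exists>!v. v \<in> e \<and> C v = Max (C ` e)"
proof -
  obtain v where v: "v \<in> e" and top: "\<forall>w\<in>e. w \<noteq> v \<longrightarrow> C w < C v"
    using assms(2) unfolding strictly_topped_def by blast
  have "Max (C ` e) = C v"
    using assms(1) v top by (intro Max_eqI) (auto simp: less_imp_le)
  then show ?thesis
    using v top by (metis less_irrefl)
qed

lemma strictly_topped_update_outside:
  "u \<notin> e \<Longrightarrow> strictly_topped (C(u := x)) e \<longleftrightarrow> strictly_topped C e"
  unfolding strictly_topped_def by (metis fun_upd_other)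

lemma strictly_topped_singleton: "strictly_topped C {u}"
  unfolding strictly_topped_def by simp

lemma strictly_topped_by_top_colour:
  assumes "u \<in> e" "\<forall>w\<in>e - {u}. C w < c"
  shows "strictly_topped (C(u := c)) e"
  unfolding strictly_topped_def using assms by (intro bexI[of _ u]) auto

lemma strictly_topped_extend:
  assumes "finite e" "u \<in> e" "strictly_topped C (e - {u})" "x \<noteq> Max (C ` (e - {u}))"
  shows "strictly_topped (C(u := x)) e"
proof -
  obtain v where v: "v \<in> e - {u}" and top: "\<forall>w\<in>e - {u}. w \<noteq> v \<longrightarrow> C w < C v"
    using assms(3) unfolding strictly_topped_def by blast
  have "Max (C ` (e - {u})) = C v"
    using assms(1) v top by (intro Max_eqI) (auto simp: less_imp_le)
  with assms(4) consider "x < C v" | "C v < x" by linarith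
  then show ?thesis
  proof cases
    case 1
    then show ?thesis
      unfolding strictly_topped_def using v top by (intro bexI[of _ v]) auto
  next
    case 2
    have "\<forall>w\<in>e - {u}. C w < x"
      using top 2 by (metis less_trans)
    with assms(2) show ?thesis
      by (rule strictly_topped_by_top_colour)
  qed
qed

lemma finite_hypergraph_finite_edges:
  assumes "finite_hypergraph V E"
  shows "finite E" and "\<And>e. e \<in> E \<Longrightarrow> finite e"
  using assms unfolding finite_hypergraph_def
  by (auto intro: finite_subset[of E "Pow V"] finite_subset)

lemma finite_hypergraph_weak_delete:
  "finite_hypergraph V E \<Longrightarrow> finite_hypergraph (V - {u}) (weak_delete u E)"
  unfolding finite_hypergraph_def weak_delete_def by auto

lemma finite_hypergraph_strong_delete:
  "finite_hypergraph V E \<Longrightarrow> finite_hypergraph (V - {u}) (strong_delete u E)"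
  unfolding finite_hypergraph_def strong_delete_def by auto

lemma card_weak_delete_le:
  assumes "finite E"
  shows "card (weak_delete u E) \<le> card E"
proof -
  have "card (weak_delete u E) \<le> card ((\<lambda>e. e - {u}) ` E)"
    unfolding weak_delete_def using assms by (intro card_mono) auto
  also have "\<dots> \<le> card E"
    using assms by (rule card_image_le)
  finally show ?thesis .
qed

lemma card_strong_delete_plus_degree:
  assumes "finite E"
  shows "card (strong_delete u E) + degree u E = card E"
proof -
  have "E = strong_delete u E \<union> {e \<in> E. u \<in> e}"
    unfolding strong_delete_def by auto
  then show ?thesis
    unfolding degree_def strong_delete_def using assms
    by (metis (no_types, lifting) card_Un_disjoint disjoint_iff finite_Un mem_Collect_eq)
qed

lemma low_degree_step:
  assumes H: "finite_hypergraph V E"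
    and deg: "degree u E < card (L u)"
    and col: "topping_list_colourable (V - {u}) (weak_delete u E) L"
  shows "topping_list_colourable V E L"
proof -
  obtain C' where C'_list: "\<forall>v\<in>V - {u}. C' v \<in> L v"
    and C'_top: "\<forall>e\<in>weak_delete u E. strictly_topped C' e"
    using col unfolding topping_list_colourable_def by blast
  define F where "F = (\<lambda>e. Max (C' ` (e - {u}))) ` {e \<in> E. u \<in> e}"
  have "finite F"
    unfolding F_def using finite_hypergraph_finite_edges(1)[OF H] by simp
  moreover have "card F \<le> degree u E"
    unfolding F_def degree_def by (rule card_image_le) (use finite_hypergraph_finite_edges(1)[OF H] in simp)
  ultimately have "\<not> L u \<subseteq> F"
    using deg by (metis card_mono leD le_less_trans)
  then obtain x where x: "x \<in> L u" "x \<notin> F" by blast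
  define C where "C = C'(u := x)"
  have "strictly_topped C e" if e: "e \<in> E" for e
  proof (cases "u \<in> e")
    case False
    moreover have "e \<noteq> {}"
      using e H unfolding finite_hypergraph_def by blast
    moreover have "e = e - {u}"
      using False by simp
    ultimately have "e \<in> weak_delete u E"
      using e unfolding weak_delete_def by blast
    then show ?thesis
      unfolding C_def using C'_top False by (simp add: strictly_topped_update_outside)
  next
    case True
    show ?thesis
    proof (cases "e = {u}")
      case True
      then show ?thesis by (simp add: strictly_topped_singleton)
    next
      case False
      then have "e - {u} \<in> weak_delete u E"
        using e \<open>u \<in> e\<close> unfolding weak_delete_def by auto
      then have "strictly_topped C' (e - {u})"
        using C'_top by blast
      moreover have "x \<noteq> Max (C' ` (e - {u}))"
        using x e \<open>u \<in> e\<close> unfolding F_def by auto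
      ultimately show ?thesis
        unfolding C_def
        by (rule strictly_topped_extend[OF finite_hypergraph_finite_edges(2)[OF H e] \<open>u \<in> e\<close>])
    qed
  qed
  moreover have "\<forall>v\<in>V. C v \<in> L v"
    using C'_list x unfolding C_def by auto
  ultimately show ?thesis
    unfolding topping_list_colourable_def by blast
qed

text \<open>A vertex owning the overall largest colour c takes it: c tops all its edges,
  provided the other vertices were coloured avoiding c.\<close>
lemma top_colour_step:
  assumes H: "finite_hypergraph V E"
    and c: "c \<in> L u" "\<forall>v\<in>V. \<forall>y\<in>L v. y \<le> c"
    and col: "topping_list_colourable (V - {u}) (strong_delete u E) (\<lambda>v. L v - {c})"
  shows "topping_list_colourable V E L"
proof -
  obtain C' where C'_list: "\<forall>v\<in>V - {u}. C' v \<in> L v - {c}"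
    and C'_top: "\<forall>e\<in>strong_delete u E. strictly_topped C' e"
    using col unfolding topping_list_colourable_def by blast
  define C where "C = C'(u := c)"
  have "strictly_topped C e" if e: "e \<in> E" for e
  proof (cases "u \<in> e")
    case False
    then show ?thesis
      unfolding C_def using C'_top e
      by (simp add: strong_delete_def strictly_topped_update_outside)
  next
    case True
    have "e \<subseteq> V"
      using H e unfolding finite_hypergraph_def by blast
    then have "\<forall>w\<in>e - {u}. C' w < c"
      using C'_list c(2) by (metis Diff_iff insertCI le_neq_implies_less subsetD)
    with True show ?thesis
      unfolding C_def by (rule strictly_topped_by_top_colour)
  qed
  moreover have "\<forall>v\<in>V. C v \<in> L v"
    using C'_list c(1) unfolding C_def by auto
  ultimately show ?thesis
    unfolding topping_list_colourable_def by blast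
qed

text \<open>Consecutive triangular numbers: removing k edges from a budget of k(k-1)/2
  leaves at most (k-1)(k-2)/2.\<close>
lemma triangular_step: "(k::nat) * (k - 1) div 2 = (k - 1) * (k - 2) div 2 + (k - 1)"
proof (cases k)
  case (Suc j)
  have "Suc j * j = j * (j - 1) + 2 * j"
    by (cases j) simp_all
  then show ?thesis
    using Suc by simp
qed simp

lemma exists_top_colour:
  assumes "finite V" "\<forall>v\<in>V. finite (L v)" "v0 \<in> V" "L v0 \<noteq> {}"
  obtains u c where "u \<in> V" "c \<in> L u" "\<forall>v\<in>V. \<forall>y\<in>L v. y \<le> (c::nat)"
proof -
  define c where "c = Max (\<Union>v\<in>V. L v)"
  have fin_colours: "finite (\<Union>v\<in>V. L v)"
    using assms(1,2) by blast
  have "(\<Union>v\<in>V. L v) \<noteq> {}"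
    using assms(3,4) by blast
  then have "c \<in> (\<Union>v\<in>V. L v)"
    unfolding c_def using fin_colours by (rule Max_in[rotated])
  moreover have "\<forall>v\<in>V. \<forall>y\<in>L v. y \<le> c"
    unfolding c_def using Max_ge[OF fin_colours] by blast
  ultimately show ?thesis
    using that by blast
qed

lemma topping_list_colourable_if_few_edges:
  assumes "finite_hypergraph V E"
    and "\<forall>v\<in>V. finite (L v) \<and> k \<le> card (L v)" "0 < k"
    and "card E \<le> k * (k - 1) div 2"
  shows "topping_list_colourable V E L"
  using assms
proof (induction "card V" arbitrary: V E L k rule: less_induct)
  case less
  note H = less.prems(1) and lists = less.prems(2) and k = less.prems(3)
    and few = less.prems(4)
  have finE: "finite E"
    using H by (rule finite_hypergraph_finite_edges(1))
  have finV: "finite V"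
    using H unfolding finite_hypergraph_def by blast
  have smaller: "card (V - {u}) < card V" if "u \<in> V" for u
    using finV that by (rule card_Diff1_less)
  consider "V = {}" | u where "u \<in> V" "degree u E < k" | "V \<noteq> {}" "\<forall>u\<in>V. k \<le> degree u E"
    by (metis not_le)
  then show ?case
  proof cases
    case 1
    then have "E = {}"
      using H unfolding finite_hypergraph_def by blast
    then show ?thesis
      using 1 by (simp add: topping_list_colourable_def)
  next
    case (2 u)
    have "topping_list_colourable (V - {u}) (weak_delete u E) L"
    proof (rule less.hyps[OF smaller[OF 2(1)] finite_hypergraph_weak_delete[OF H] _ k])
      show "\<forall>v\<in>V - {u}. finite (L v) \<and> k \<le> card (L v)"
        using lists by blast
      show "card (weak_delete u E) \<le> k * (k - 1) div 2"
        using card_weak_delete_le[OF finE] few by (rule le_trans)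
    qed
    moreover have "degree u E < card (L u)"
      using 2 lists by (meson less_le_trans)
    ultimately show ?thesis
      using low_degree_step[OF H] by blast
  next
    case 3
    obtain v0 where "v0 \<in> V"
      using 3(1) by blast
    then have "k \<le> card (L v0)"
      using lists by blast
    with k have "L v0 \<noteq> {}" by auto
    moreover have "\<forall>v\<in>V. finite (L v)"
      using lists by blast
    ultimately obtain u c
      where u: "u \<in> V" "c \<in> L u" and c_max: "\<forall>v\<in>V. \<forall>y\<in>L v. y \<le> c"
      using exists_top_colour[OF finV _ \<open>v0 \<in> V\<close>] by blast
    have deg: "k \<le> degree u E"
      using 3(2) u(1) by blast
    have k2: "2 \<le> k"
    proof (rule ccontr)
      assume "\<not> 2 \<le> k"
      with k have "k = 1" by linarith
      with few finE have "E = {}" by simp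
      with deg \<open>k = 1\<close> show False by (simp add: degree_def)
    qed
    have "topping_list_colourable (V - {u}) (strong_delete u E) (\<lambda>v. L v - {c})"
    proof (rule less.hyps[OF smaller[OF u(1)] finite_hypergraph_strong_delete[OF H]])
      show "\<forall>v\<in>V - {u}. finite (L v - {c}) \<and> k - 1 \<le> card (L v - {c})"
      proof
        fix v assume "v \<in> V - {u}"
        then have "finite (L v)" "k \<le> card (L v)"
          using lists by auto
        then show "finite (L v - {c}) \<and> k - 1 \<le> card (L v - {c})"
          by (auto simp: card_Diff_singleton_if)
      qed
      show "0 < k - 1"
        using k2 by linarith
      show "card (strong_delete u E) \<le> (k - 1) * (k - 1 - 1) div 2"
        using card_strong_delete_plus_degree[OF finE, of u] deg few triangular_step[of k]
        by (simp add: numeral_2_eq_2)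
    qed
    then show ?thesis
      by (rule top_colour_step[OF H u(2) c_max])
  qed
qed

text \<open>s(H) satisfies its defining inequality (card E + 2 is a witness).\<close>
lemma s_num_spec: "0 < s_num E \<and> card E \<le> s_num E * (s_num E - 1) div 2"
  unfolding s_num_def
proof (rule LeastI)
  have "card E * 2 \<le> (card E + 2) * (card E + 1)"
    by (simp add: algebra_simps)
  then show "0 < card E + 2 \<and> card E \<le> (card E + 2) * (card E + 2 - 1) div 2"
    by simp
qed

lemma finite_sublist:
  assumes "infinite A \<or> k \<le> card A"
  shows "\<exists>T \<subseteq> A. finite T \<and> card T = k"
proof (cases "finite A")
  case True
  with assms have "k \<le> card A" by blast
  then obtain T where "T \<subseteq> A" "card T = k" "finite T"
    by (rule obtain_subset_with_card_n)
  then show ?thesis by blast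
next
  case False
  then show ?thesis
    using infinite_arbitrarily_large by blast
qed

lemma um_choosable_if_few_edges:
  assumes H: "finite_hypergraph V E" and k: "0 < k" "card E \<le> k * (k - 1) div 2"
  shows "um_choosable V E k"
  unfolding um_choosable_def
proof (intro allI impI)
  fix L :: "'a \<Rightarrow> nat set"
  assume L: "\<forall>v\<in>V. L v \<subseteq> {0<..} \<and> (infinite (L v) \<or> k \<le> card (L v))"
  then have "\<forall>v\<in>V. \<exists>T \<subseteq> L v. finite T \<and> card T = k"
    by (blast intro: finite_sublist)
  then obtain T where T: "\<forall>v\<in>V. T v \<subseteq> L v \<and> finite (T v) \<and> card (T v) = k"
    using bchoice[of V "\<lambda>v T. T \<subseteq> L v \<and> finite T \<and> card T = k"] by blast
  have "\<forall>v\<in>V. finite (T v) \<and> k \<le> card (T v)"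
    using T by simp
  then have "topping_list_colourable V E T"
    using topping_list_colourable_if_few_edges[OF H _ k] by blast
  then obtain C where C_list: "\<forall>v\<in>V. C v \<in> T v" and C_top: "\<forall>e\<in>E. strictly_topped C e"
    unfolding topping_list_colourable_def by blast
  have "\<forall>v\<in>V. 0 < C v"
  proof
    fix v assume "v \<in> V"
    then have "C v \<in> L v" "L v \<subseteq> {0<..}"
      using C_list T L by blast+
    then show "0 < C v" by auto
  qed
  moreover have "\<forall>e\<in>E. \<exists>!v. v \<in> e \<and> C v = Max (C ` e)"
  proof
    fix e assume e: "e \<in> E"
    show "\<exists>!v. v \<in> e \<and> C v = Max (C ` e)"
      using finite_hypergraph_finite_edges(2)[OF H e] C_top[rule_format, OF e]
      by (rule strictly_topped_imp_unique_max)
  qed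
  ultimately have "um_coloring V E C"
    unfolding um_coloring_def by blast
  then show "\<exists>C. um_coloring V E C \<and> (\<forall>v\<in>V. C v \<in> L v)"
    using C_list T by blast
qed

theorem corollary5p5:
  fixes V :: "'a set" and E :: "'a set set"
  assumes "finite_hypergraph V E"
  shows "ch_um V E \<le> s_num E"
proof -
  have "um_choosable V E (s_num E)"
    using assms s_num_spec by (intro um_choosable_if_few_edges) auto
  then show ?thesis
    unfolding ch_um_def by (rule Least_le)
qed

end
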